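(* For all integers $n \geq k \geq 1$, there is a bi-partition $B$ of the input positions of $\operatorname{SSD}_{3n,4k}$ between Alice and Bob such that the communication complexity of $\operatorname{DISJ}^n_k$ is at most the cost of an optimal protocol for $\operatorname{SSD}_{3n,4k}$ under $B$ (both for deterministic protocols and for randomized protocols with error at most $1/3$).
   Context: $\operatorname{SSD}_{n,k} : \{0,1\}^n \times \{0,1\}^k \to \{0,1\}$ is $1$ iff $y$ is a subsequence of $x$ (there exist indices $i_1 < \dots < i_k$ with $x_{i_j} = y_j$). A bi-partition assigns each of the $n+k$ input positions of $(x,y)$ to Alice or Bob. $\operatorname{DISJ}^n_k$ is set disjointness restricted to sets of size $k$: Alice holds $a \in \{0,1\}^n$ and Bob holds $b \in \{0,1\}^n$, both of Hamming weight exactly $k$, and the output is $1$ iff there is no $i$ with $a_i = b_i = 1$. *)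

theory Defs
  imports "HOL-Probability.Probability_Mass_Function" "HOL-Library.Sublist"
begin

text \<open>A node (Ask True g l r) is a bit sent by Alice, (Ask False g l r) a bit sent by Bob;
  the bit g z selects the subtree (True: left).\<close>

datatype 'i proto = Leaf bool | Ask bool "'i \<Rightarrow> bool" "'i proto" "'i proto"

fun run :: "'i proto \<Rightarrow> 'i \<Rightarrow> bool" where
  "run (Leaf b) z = b"
| "run (Ask w g l r) z = (if g z then run l z else run r z)"

fun depth :: "'i proto \<Rightarrow> nat" where
  "depth (Leaf b) = 0"
| "depth (Ask w g l r) = Suc (max (depth l) (depth r))"

fun valid :: "('i \<Rightarrow> 'va) \<Rightarrow> ('i \<Rightarrow> 'vb) \<Rightarrow> 'i proto \<Rightarrow> bool" where
  "valid va vb (Leaf b) = True"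
| "valid va vb (Ask w g l r) =
     ((if w then (\<forall>z z'. va z = va z' \<longrightarrow> g z = g z')
            else (\<forall>z z'. vb z = vb z' \<longrightarrow> g z = g z'))
      \<and> valid va vb l \<and> valid va vb r)"

definition Dcc :: "('i \<Rightarrow> 'va) \<Rightarrow> ('i \<Rightarrow> 'vb) \<Rightarrow> 'i set \<Rightarrow> ('i \<Rightarrow> bool) \<Rightarrow> nat" where
  "Dcc va vb X f = (LEAST d. \<exists>p. valid va vb p \<and> depth p \<le> d \<and> (\<forall>z\<in>X. run p z = f z))"

text \<open>Randomized (public-coin) protocols: finitely supported distributions over
  deterministic protocols; cost = worst-case depth; error at most eps on every input of X.\<close>
definition Rcc :: "('i \<Rightarrow> 'va) \<Rightarrow> ('i \<Rightarrow> 'vb) \<Rightarrow> 'i set \<Rightarrow> ('i \<Rightarrow> bool) \<Rightarrow> real \<Rightarrow> nat" where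
  "Rcc va vb X f eps = (LEAST d. \<exists>P :: 'i proto pmf. finite (set_pmf P) \<and>
      (\<forall>p\<in>set_pmf P. valid va vb p \<and> depth p \<le> d) \<and>
      (\<forall>z\<in>X. measure_pmf.prob P {p. run p z \<noteq> f z} \<le> eps))"

definition disj_dom :: "nat \<Rightarrow> nat \<Rightarrow> (bool list \<times> bool list) set" where
  "disj_dom n k = {(a, b). length a = n \<and> length b = n \<and>
       count_list a True = k \<and> count_list b True = k}"

definition DISJ :: "bool list \<times> bool list \<Rightarrow> bool" where
  "DISJ ab = (\<not> (\<exists>i < length (fst ab). fst ab ! i \<and> snd ab ! i))"

text \<open>SSD_{N,K}: input is the concatenation z = x @ y (positions 0..N-1 hold x,
  positions N..N+K-1 hold y); value 1 iff y is a subsequence of x.\<close>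
definition ssd_dom :: "nat \<Rightarrow> nat \<Rightarrow> bool list set" where
  "ssd_dom N K = {z. length z = N + K}"

definition SSD :: "nat \<Rightarrow> bool list \<Rightarrow> bool" where
  "SSD N z = subseq (drop N z) (take N z)"

definition view :: "nat set \<Rightarrow> bool list \<Rightarrow> nat \<Rightarrow> bool option" where
  "view S z = (\<lambda>i. if i \<in> S \<and> i < length z then Some (z ! i) else None)"

end

theory Submission
  imports Defs
begin

(* Alice holds a, Bob holds b. Interleave them as x = b_0 a_0 0 b_1 a_1 0 ... b_(n-1) a_(n-1) 0
   and let y = (10)^(2k). Every 3-block of x ends in its only 0, so a greedy embedding of y
   matches one 10 in each block where b_i or a_i is set and nothing elsewhere. Hence y is a
   subsequence of x iff |A \<union> B| \<ge> 2k = |A| + |B|, i.e. iff A and B are disjoint. If Alice owns the positions of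
   the a_i and Bob all others, every protocol for SSD pulls back along this encoding to a
   protocol for DISJ of the same depth and error. *)

fun proto_map :: "('x \<Rightarrow> 'y) \<Rightarrow> 'y proto \<Rightarrow> 'x proto" where
  "proto_map h (Leaf b) = Leaf b"
| "proto_map h (Ask w g l r) = Ask w (g \<circ> h) (proto_map h l) (proto_map h r)"

lemma run_proto_map: "run (proto_map h p) x = run p (h x)"
  by (induction p) auto

lemma depth_proto_map: "depth (proto_map h p) = depth p"
  by (induction p) auto

lemma valid_proto_map:
  assumes "\<And>x x'. va' x = va' x' \<Longrightarrow> va (h x) = va (h x')"
      and "\<And>x x'. vb' x = vb' x' \<Longrightarrow> vb (h x) = vb (h x')"
  shows "valid va vb p \<Longrightarrow> valid va' vb' (proto_map h p)"
proof (induction p)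
  case (Ask w g l r)
  (* no_asm_use: a premise v z = v z' \<longrightarrow> g z = g z' would make the simplifier loop *)
  then show ?case
    by (cases w) (simp_all (no_asm_use), metis assms(1), metis assms(2))
qed simp

lemma Dcc_le_depth:
  assumes "valid va vb p" "depth p \<le> d" "\<forall>z\<in>X. run p z = f z"
  shows "Dcc va vb X f \<le> d"
  unfolding Dcc_def using assms by (intro Least_le) blast

lemma Dcc_attained:
  assumes "valid va vb p" "\<forall>z\<in>X. run p z = f z"
  obtains q where "valid va vb q" "depth q \<le> Dcc va vb X f" "\<forall>z\<in>X. run q z = f z"
  using LeastI_ex[of "\<lambda>d. \<exists>q. valid va vb q \<and> depth q \<le> d \<and> (\<forall>z\<in>X. run q z = f z)"] assms
  unfolding Dcc_def by blast

lemma Rcc_le_depth: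
  assumes "finite (set_pmf P)" "\<forall>p\<in>set_pmf P. valid va vb p \<and> depth p \<le> d"
      and "\<forall>z\<in>X. measure_pmf.prob P {p. run p z \<noteq> f z} \<le> eps"
  shows "Rcc va vb X f eps \<le> d"
  unfolding Rcc_def using assms by (intro Least_le) blast

lemma Rcc_attained:
  assumes "valid va vb p" "\<forall>z\<in>X. run p z = f z" "0 \<le> eps"
  obtains P where "finite (set_pmf P)" "\<forall>q\<in>set_pmf P. valid va vb q \<and> depth q \<le> Rcc va vb X f eps"
      "\<forall>z\<in>X. measure_pmf.prob P {q. run q z \<noteq> f z} \<le> eps"
proof -
  let ?good = "\<lambda>d. \<exists>P :: _ proto pmf. finite (set_pmf P) \<and>
      (\<forall>q\<in>set_pmf P. valid va vb q \<and> depth q \<le> d) \<and>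
      (\<forall>z\<in>X. measure_pmf.prob P {q. run q z \<noteq> f z} \<le> eps)"
  have "?good (depth p)"
    using assms by (intro exI[of _ "return_pmf p"]) simp
  then have "?good (Rcc va vb X f eps)"
    unfolding Rcc_def by (rule LeastI)
  then show thesis
    using that by blast
qed

lemma Dcc_reduction:
  assumes "valid va vb p" "\<forall>z\<in>Y. run p z = g z"
      and "\<And>x x'. va' x = va' x' \<Longrightarrow> va (h x) = va (h x')"
      and "\<And>x x'. vb' x = vb' x' \<Longrightarrow> vb (h x) = vb (h x')"
      and "\<And>x. x \<in> X \<Longrightarrow> h x \<in> Y \<and> f x = g (h x)"
  shows "Dcc va' vb' X f \<le> Dcc va vb Y g"
proof -
  obtain q where "valid va vb q" "depth q \<le> Dcc va vb Y g" "\<forall>z\<in>Y. run q z = g z"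
    using Dcc_attained assms(1,2) by blast
  then show ?thesis
    using assms(5)
    by (intro Dcc_le_depth[of _ _ "proto_map h q"])
      (simp_all add: valid_proto_map[of va' va h vb' vb, OF assms(3,4)] depth_proto_map run_proto_map)
qed

lemma Rcc_reduction:
  assumes "valid va vb p" "\<forall>z\<in>Y. run p z = g z" "0 \<le> eps"
      and "\<And>x x'. va' x = va' x' \<Longrightarrow> va (h x) = va (h x')"
      and "\<And>x x'. vb' x = vb' x' \<Longrightarrow> vb (h x) = vb (h x')"
      and "\<And>x. x \<in> X \<Longrightarrow> h x \<in> Y \<and> f x = g (h x)"
  shows "Rcc va' vb' X f eps \<le> Rcc va vb Y g eps"
proof -
  obtain P where P: "finite (set_pmf P)" "\<forall>q\<in>set_pmf P. valid va vb q \<and> depth q \<le> Rcc va vb Y g eps"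
      "\<forall>z\<in>Y. measure_pmf.prob P {q. run q z \<noteq> g z} \<le> eps"
    using Rcc_attained assms(1-3) by blast
  have "measure_pmf.prob (map_pmf (proto_map h) P) {q. run q x \<noteq> f x} \<le> eps" if "x \<in> X" for x
  proof -
    have "proto_map h -` {q. run q x \<noteq> f x} = {q. run q (h x) \<noteq> g (h x)}"
      using assms(6)[OF that] by (auto simp: run_proto_map)
    then show ?thesis
      using P(3) assms(6)[OF that] by simp
  qed
  with P(1,2) assms(4,5) show ?thesis
    by (intro Rcc_le_depth[of "map_pmf (proto_map h) P"])
      (auto simp: valid_proto_map[of va' va h vb' vb, OF assms(4,5)] depth_proto_map)
qed

(* The owner of each position announces its bit in turn; this witnesses that the LEAST in
   Dcc and Rcc is attained. *)
fun query_proto :: "nat set \<Rightarrow> (bool list \<Rightarrow> bool) \<Rightarrow> nat \<Rightarrow> nat \<Rightarrow> bool list proto" where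
  "query_proto S f i 0 = Leaf (f [])"
| "query_proto S f i (Suc r) = Ask (i \<in> S) (\<lambda>z. i < length z \<and> z ! i)
     (query_proto S (\<lambda>w. f (True # w)) (Suc i) r) (query_proto S (\<lambda>w. f (False # w)) (Suc i) r)"

lemma run_query_proto: "length z = i + r \<Longrightarrow> run (query_proto S f i r) z = f (drop i z)"
proof (induction r arbitrary: f i)
  case (Suc r)
  then have "drop i z = z ! i # drop (Suc i) z"
    by (simp add: Cons_nth_drop_Suc)
  with Suc show ?case
    by simp
qed simp

lemma view_eq_nth:
  assumes "view S z = view S z'" "i \<in> S"
  shows "(i < length z \<and> z ! i) = (i < length z' \<and> z' ! i)"
  using fun_cong[OF assms(1), of i] assms(2) by (auto simp: view_def split: if_splits)

lemma valid_query_proto: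
  "{i..<i + r} \<subseteq> S \<union> S' \<Longrightarrow> valid (view S) (view S') (query_proto S f i r)"
proof (induction r arbitrary: f i)
  case (Suc r)
  then have i: "i \<in> S \<union> S'" and rest: "{Suc i..<Suc i + r} \<subseteq> S \<union> S'"
    by (auto simp: subset_iff)
  let ?bit = "\<lambda>z. i < length z \<and> z ! i"
  have "\<forall>z z'. view S z = view S z' \<longrightarrow> ?bit z = ?bit z'" if "i \<in> S"
    using view_eq_nth that by blast
  moreover have "\<forall>z z'. view S' z = view S' z' \<longrightarrow> ?bit z = ?bit z'" if "i \<notin> S"
    using view_eq_nth i that by blast
  ultimately show ?case
    using Suc.IH[OF rest] unfolding query_proto.simps valid.simps
    by (subst if_split) blast
qed simp

lemma ex_valid_proto_if_covered:
  assumes "{0..<N} \<subseteq> S \<union> S'"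
  shows "\<exists>p. valid (view S) (view S') p \<and> (\<forall>z. length z = N \<longrightarrow> run p z = f z)"
  using assms by (intro exI[of _ "query_proto S f 0 N"]) (simp add: run_query_proto valid_query_proto)

definition alternating :: "nat \<Rightarrow> bool list" where
  "alternating m = concat (replicate m [True, False])"

lemma alternating_simps:
  "alternating 0 = []"
  "alternating (Suc m) = True # False # alternating m"
  by (simp_all add: alternating_def)

lemma length_alternating: "length (alternating m) = 2 * m"
  by (induction m) (simp_all add: alternating_simps)

lemma subseq_alternating_False_Cons: "subseq (alternating m) (False # ys) \<longleftrightarrow> subseq (alternating m) ys"
  by (cases m) (auto simp: alternating_simps)

lemma subseq_alternating_triples:
  "subseq (alternating m) (concat (map (\<lambda>i. [f i, g i, False]) xs)) \<longleftrightarrow>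
     m \<le> length (filter (\<lambda>i. f i \<or> g i) xs)"
proof (induction xs arbitrary: m)
  case Nil
  then show ?case
    by (cases m) (auto simp: alternating_simps)
next
  case (Cons x xs)
  show ?case
  proof (cases "f x \<or> g x")
    case True
    then show ?thesis
      using Cons.IH by (cases m; cases "f x") (simp_all add: alternating_simps subseq_alternating_False_Cons)
  next
    case False
    then show ?thesis
      using Cons.IH by (simp add: subseq_alternating_False_Cons)
  qed
qed

lemma length_concat_triples: "length (concat (map (\<lambda>i. [f i, g i, c i]) [0..<n])) = 3 * n"
  by (induction n) auto

lemma nth_concat_triples:
  "j < 3 * n \<Longrightarrow> concat (map (\<lambda>i. [f i, g i, c i]) [0..<n]) ! j =
     [f (j div 3), g (j div 3), c (j div 3)] ! (j mod 3)"
proof (induction n)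
  case (Suc n)
  show ?case
  proof (cases "j < 3 * n")
    case False
    with Suc.prems have "j div 3 = n" "j mod 3 = j - 3 * n"
      by presburger+
    then show ?thesis
      using False by (simp add: nth_append length_concat_triples)
  qed (use Suc in \<open>simp add: nth_append length_concat_triples\<close>)
qed simp

definition disj_to_ssd :: "nat \<Rightarrow> nat \<Rightarrow> bool list \<times> bool list \<Rightarrow> bool list" where
  "disj_to_ssd n k ab =
     concat (map (\<lambda>i. [snd ab ! i, fst ab ! i, False]) [0..<n]) @ alternating (2 * k)"

definition alice_positions :: "nat \<Rightarrow> nat set" where
  "alice_positions n = {j. j < 3 * n \<and> j mod 3 = 1}"

lemma length_disj_to_ssd: "length (disj_to_ssd n k ab) = 3 * n + 4 * k"
  by (simp add: disj_to_ssd_def length_concat_triples length_alternating)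

lemma nth_disj_to_ssd:
  "disj_to_ssd n k ab ! j =
     (if j < 3 * n then [snd ab ! (j div 3), fst ab ! (j div 3), False] ! (j mod 3)
      else alternating (2 * k) ! (j - 3 * n))"
  by (simp add: disj_to_ssd_def nth_append length_concat_triples nth_concat_triples)

lemma view_alice_disj_to_ssd:
  "fst ab = fst ab' \<Longrightarrow>
     view (alice_positions n) (disj_to_ssd n k ab) = view (alice_positions n) (disj_to_ssd n k ab')"
  unfolding view_def alice_positions_def
  by (rule ext) (simp add: nth_disj_to_ssd length_disj_to_ssd)

lemma view_bob_disj_to_ssd:
  assumes "snd ab = snd ab'"
  shows "view ({0..<3 * n + 4 * k} - alice_positions n) (disj_to_ssd n k ab) =
     view ({0..<3 * n + 4 * k} - alice_positions n) (disj_to_ssd n k ab')"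
proof
  fix j :: nat
  have "j mod 3 = 0 \<or> j mod 3 = 1 \<or> j mod 3 = 2"
    by presburger
  then show "view ({0..<3 * n + 4 * k} - alice_positions n) (disj_to_ssd n k ab) j =
      view ({0..<3 * n + 4 * k} - alice_positions n) (disj_to_ssd n k ab') j"
    using assms unfolding view_def alice_positions_def
    by (auto simp: nth_disj_to_ssd length_disj_to_ssd)
qed

lemma card_Un_ge_add_iff_disjoint:
  assumes "finite A" "finite B"
  shows "card A + card B \<le> card (A \<union> B) \<longleftrightarrow> A \<inter> B = {}"
  using card_Un_Int[OF assms] assms by auto

lemma SSD_disj_to_ssd:
  assumes "(a, b) \<in> disj_dom n k"
  shows "SSD (3 * n) (disj_to_ssd n k (a, b)) = DISJ (a, b)"
proof -
  define A where "A = {i. i < n \<and> a ! i}"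
  define B where "B = {i. i < n \<and> b ! i}"
  have "count_list xs True = card {i. i < length xs \<and> xs ! i}" for xs
    by (simp add: count_list_eq_length_filter length_filter_conv_card eq_commute)
  with assms have "card A = k" "card B = k"
    by (auto simp: disj_dom_def A_def B_def)
  have "{i. b ! i \<or> a ! i} \<inter> {0..<n} = A \<union> B"
    by (auto simp: A_def B_def)
  then have "SSD (3 * n) (disj_to_ssd n k (a, b)) \<longleftrightarrow> 2 * k \<le> card (A \<union> B)"
    by (simp add: SSD_def disj_to_ssd_def length_concat_triples subseq_alternating_triples
        distinct_length_filter)
  also have "\<dots> \<longleftrightarrow> card A + card B \<le> card (A \<union> B)"
    using \<open>card A = k\<close> \<open>card B = k\<close> by (simp add: mult_2)
  also have "\<dots> \<longleftrightarrow> A \<inter> B = {}"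
    by (simp add: card_Un_ge_add_iff_disjoint A_def B_def)
  also have "\<dots> \<longleftrightarrow> DISJ (a, b)"
    using assms by (auto simp: DISJ_def disj_dom_def A_def B_def)
  finally show ?thesis .
qed

theorem mainTheorem8:
  fixes n k :: nat
  assumes "1 \<le> k" and "k \<le> n"
  shows "\<exists>A. A \<subseteq> {0..<3*n + 4*k} \<and>
    Dcc fst snd (disj_dom n k) DISJ
      \<le> Dcc (view A) (view ({0..<3*n + 4*k} - A)) (ssd_dom (3*n) (4*k)) (SSD (3*n)) \<and>
    Rcc fst snd (disj_dom n k) DISJ (1/3)
      \<le> Rcc (view A) (view ({0..<3*n + 4*k} - A)) (ssd_dom (3*n) (4*k)) (SSD (3*n)) (1/3)"
proof (intro exI conjI)
  let ?A = "alice_positions n" and ?B = "{0..<3*n + 4*k} - alice_positions n"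
  show "?A \<subseteq> {0..<3*n + 4*k}"
    by (auto simp: alice_positions_def)
  obtain p where p: "valid (view ?A) (view ?B) p" "\<forall>z\<in>ssd_dom (3*n) (4*k). run p z = SSD (3*n) z"
    using ex_valid_proto_if_covered[of "3*n + 4*k" ?A ?B "SSD (3*n)"] by (auto simp: ssd_dom_def)
  have reduction: "disj_to_ssd n k ab \<in> ssd_dom (3*n) (4*k) \<and> DISJ ab = SSD (3*n) (disj_to_ssd n k ab)"
    if "ab \<in> disj_dom n k" for ab
    using that SSD_disj_to_ssd[of "fst ab" "snd ab"] by (simp add: ssd_dom_def length_disj_to_ssd)
  show "Dcc fst snd (disj_dom n k) DISJ \<le> Dcc (view ?A) (view ?B) (ssd_dom (3*n) (4*k)) (SSD (3*n))"
    by (rule Dcc_reduction[OF p view_alice_disj_to_ssd view_bob_disj_to_ssd reduction])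
  show "Rcc fst snd (disj_dom n k) DISJ (1/3)
      \<le> Rcc (view ?A) (view ?B) (ssd_dom (3*n) (4*k)) (SSD (3*n)) (1/3)"
    by (rule Rcc_reduction[OF p _ view_alice_disj_to_ssd view_bob_disj_to_ssd reduction]) simp
qed

end
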